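(* Let $m\geq 3$ and $n\geq 2$ be integers, let $K_m$ be the complete graph of order $m$ and $H_n$ a graph of order $n$. Then $rvc(K_m\diamond H_n)=\lceil m/3\rceil$.
   Context: All graphs are finite, simple, connected and undirected. A rainbow vertex $k$-coloring of $G$ is a map $c:V(G)\to\{1,\dots,k\}$ such that every two vertices are joined by a path whose internal vertices all receive distinct colors; $rvc(G)$ is the least $k$ for which $G$ has one. For graphs $G_m$ (order $m$) and $H_n$ (order $n$) on disjoint vertex sets, the edge corona $G_m\diamond H_n$ is obtained from one copy of $G_m$ and $|E(G_m)|$ vertex-disjoint copies of $H_n$, one per edge of $G_m$, by joining both end vertices of the $j$-th edge of $G_m$ to every vertex of the $j$-th copy of $H_n$. *)

theory Defs
  imports Complex_Main
begin

definition simple_graph :: "'v set \<Rightarrow> 'v set set \<Rightarrow> bool" where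
  "simple_graph V E \<longleftrightarrow> finite V \<and> (\<forall>e\<in>E. \<exists>x y. e = {x, y} \<and> x \<noteq> y \<and> x \<in> V \<and> y \<in> V)"

definition is_path :: "'v set \<Rightarrow> 'v set set \<Rightarrow> 'v list \<Rightarrow> 'v \<Rightarrow> 'v \<Rightarrow> bool" where
  "is_path V E xs u v \<longleftrightarrow> xs \<noteq> [] \<and> hd xs = u \<and> last xs = v \<and> set xs \<subseteq> V \<and> distinct xs \<and>
     (\<forall>i < length xs - 1. {xs ! i, xs ! Suc i} \<in> E)"

definition connected_graph :: "'v set \<Rightarrow> 'v set set \<Rightarrow> bool" where
  "connected_graph V E \<longleftrightarrow> (\<forall>u\<in>V. \<forall>v\<in>V. \<exists>xs. is_path V E xs u v)"

definition internal :: "'v list \<Rightarrow> 'v list" where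
  "internal xs = butlast (tl xs)"

definition rainbow_vertex_coloring :: "'v set \<Rightarrow> 'v set set \<Rightarrow> nat \<Rightarrow> ('v \<Rightarrow> nat) \<Rightarrow> bool" where
  "rainbow_vertex_coloring V E k c \<longleftrightarrow> c ` V \<subseteq> {1..k} \<and>
     (\<forall>u\<in>V. \<forall>v\<in>V. \<exists>xs. is_path V E xs u v \<and> distinct (map c (internal xs)))"

definition rvc :: "'v set \<Rightarrow> 'v set set \<Rightarrow> nat" where
  "rvc V E = (LEAST k. \<exists>c. rainbow_vertex_coloring V E k c)"

definition complete_edges :: "'v set \<Rightarrow> 'v set set" where
  "complete_edges V = {{x, y} | x y. x \<in> V \<and> y \<in> V \<and> x \<noteq> y}"

text \<open>Edge corona of (V,E) and (W,F): G-vertices are Inl x; the copy of w in the copy of H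
  attached to edge e is Inr (e, w).\<close>
definition ec_verts :: "'a set \<Rightarrow> 'a set set \<Rightarrow> 'b set \<Rightarrow> ('a + ('a set \<times> 'b)) set" where
  "ec_verts V E W = Inl ` V \<union> {Inr (e, w) | e w. e \<in> E \<and> w \<in> W}"

definition ec_edges :: "'a set \<Rightarrow> 'a set set \<Rightarrow> 'b set \<Rightarrow> 'b set set \<Rightarrow> ('a + ('a set \<times> 'b)) set set" where
  "ec_edges V E W F =
     (\<lambda>e. Inl ` e) ` E
     \<union> {(\<lambda>w. Inr (e, w)) ` f | e f. e \<in> E \<and> f \<in> F}
     \<union> {{Inl x, Inr (e, w)} | x e w. e \<in> E \<and> x \<in> e \<and> w \<in> W}"

end

theory Submission
  imports Defs
begin

text \<open>Upper bound: split the vertices of \<open>K\<^sub>m\<close> into \<open>\<lceil>m/3\<rceil>\<close> classes of at most three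
  vertices and color each vertex of \<open>K\<^sub>m\<close> by its class (the copies of \<open>H\<^sub>n\<close> get any color).
  Two vertices are then joined by a path with at most one internal vertex, except for vertices
  in copies attached to disjoint edges; their four end vertices cannot lie in one class, which
  yields a path with two differently colored internal vertices.

  Lower bound: a path leaving the copy of \<open>H\<^sub>n\<close> attached to an edge \<open>e\<close> passes through an end
  vertex of \<open>e\<close>. With \<open>k < m/3\<close> colors some color class contains four vertices \<open>a, b, p, q\<close>,
  and every path between the copies attached to \<open>ab\<close> and \<open>pq\<close> has two internal vertices of
  that color.\<close>

lemma is_path_singleton [simp]: "is_path V E [a] u v \<longleftrightarrow> a \<in> V \<and> u = a \<and> v = a"
  unfolding is_path_def by auto

lemma is_path_Cons:
  assumes "xs \<noteq> []"
  shows "is_path V E (a # xs) u v \<longleftrightarrow>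
    u = a \<and> a \<in> V \<and> a \<notin> set xs \<and> {a, hd xs} \<in> E \<and> is_path V E xs (hd xs) v"
proof -
  obtain n where n: "length xs = Suc n" using assms by (cases xs) auto
  have "(\<forall>i < length (a # xs) - 1. {(a # xs) ! i, (a # xs) ! Suc i} \<in> E) \<longleftrightarrow>
      {a, hd xs} \<in> E \<and> (\<forall>i < length xs - 1. {xs ! i, xs ! Suc i} \<in> E)"
    using assms n by (simp add: All_less_Suc2 hd_conv_nth)
  then show ?thesis using assms unfolding is_path_def by auto
qed

lemma is_path_rev: "is_path V E xs u v \<Longrightarrow> is_path V E (rev xs) v u"
proof -
  assume p: "is_path V E xs u v"
  have "{rev xs ! i, rev xs ! Suc i} \<in> E" if i: "i < length xs - 1" for i
  proof -
    let ?j = "length xs - Suc (Suc i)"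
    have "{xs ! ?j, xs ! Suc ?j} \<in> E" using p i unfolding is_path_def by simp
    moreover have "rev xs ! i = xs ! Suc ?j" "rev xs ! Suc i = xs ! ?j" using i
      by (auto simp: rev_nth Suc_diff_Suc)
    ultimately show ?thesis by (simp add: insert_commute)
  qed
  then show ?thesis using p unfolding is_path_def by (auto simp: hd_rev last_rev)
qed

lemma internal_rev: "internal (rev xs) = rev (internal xs)"
  unfolding internal_def by (induction xs) (auto simp: butlast_append tl_append split: list.splits)

lemma nth_in_internal: "0 < i \<Longrightarrow> Suc i < length xs \<Longrightarrow> xs ! i \<in> set (internal xs)"
proof -
  assume "0 < i" "Suc i < length xs"
  then have "internal xs ! (i - 1) = xs ! i" "i - 1 < length (internal xs)"
    unfolding internal_def by (simp_all add: nth_butlast nth_tl)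
  then show ?thesis by (metis nth_mem)
qed

lemma ex_index_leaving:
  "xs \<noteq> [] \<Longrightarrow> hd xs \<in> S \<Longrightarrow> last xs \<notin> S \<Longrightarrow>
    \<exists>i. Suc i < length xs \<and> xs ! i \<in> S \<and> xs ! Suc i \<notin> S"
proof (induction xs)
  case Nil
  then show ?case by simp
next
  case (Cons a xs)
  then have "xs \<noteq> []" by auto
  show ?case
  proof (cases "hd xs \<in> S")
    case True
    then obtain i where "Suc i < length xs \<and> xs ! i \<in> S \<and> xs ! Suc i \<notin> S"
      using Cons \<open>xs \<noteq> []\<close> by auto
    then show ?thesis by (intro exI[of _ "Suc i"]) auto
  next
    case False
    then show ?thesis using Cons \<open>xs \<noteq> []\<close> by (intro exI[of _ 0]) (auto simp: hd_conv_nth)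
  qed
qed

definition rainbow_connected :: "'v set \<Rightarrow> 'v set set \<Rightarrow> ('v \<Rightarrow> nat) \<Rightarrow> 'v \<Rightarrow> 'v \<Rightarrow> bool" where
  "rainbow_connected V E c u v \<longleftrightarrow> (\<exists>xs. is_path V E xs u v \<and> distinct (map c (internal xs)))"

lemma rainbow_vertex_coloring_iff:
  "rainbow_vertex_coloring V E k c \<longleftrightarrow> c ` V \<subseteq> {1..k} \<and> (\<forall>u\<in>V. \<forall>v\<in>V. rainbow_connected V E c u v)"
  unfolding rainbow_vertex_coloring_def rainbow_connected_def ..

lemma rainbow_connected_sym: "rainbow_connected V E c u v \<Longrightarrow> rainbow_connected V E c v u"
  unfolding rainbow_connected_def
  by (metis is_path_rev internal_rev distinct_rev rev_map)

lemma rainbow_connectedI_length_le_3: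
  "is_path V E xs u v \<Longrightarrow> length xs \<le> 3 \<Longrightarrow> rainbow_connected V E c u v"
proof -
  assume "is_path V E xs u v" "length xs \<le> 3"
  moreover have "length (internal xs) \<le> 1" using \<open>length xs \<le> 3\<close> by (simp add: internal_def)
  then have "distinct (map c (internal xs))" by (cases "internal xs") auto
  ultimately show ?thesis unfolding rainbow_connected_def by blast
qed

lemma rainbow_connected_refl: "u \<in> V \<Longrightarrow> rainbow_connected V E c u u"
  by (rule rainbow_connectedI_length_le_3[of V E "[u]"]) auto

lemma Inl_in_ec_verts [simp]: "Inl x \<in> ec_verts V E W \<longleftrightarrow> x \<in> V"
  unfolding ec_verts_def by auto

lemma Inr_in_ec_verts [simp]: "Inr (e, w) \<in> ec_verts V E W \<longleftrightarrow> e \<in> E \<and> w \<in> W"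
  unfolding ec_verts_def by auto

lemma ec_verts_cases [consumes 1, case_names Inl Inr]:
  assumes "u \<in> ec_verts V E W"
  obtains x where "x \<in> V" "u = Inl x" | e w where "e \<in> E" "w \<in> W" "u = Inr (e, w)"
  using assms unfolding ec_verts_def by blast

lemma Inl_Inl_in_ec_edges: "{x, y} \<in> E \<Longrightarrow> {Inl x, Inl y} \<in> ec_edges V E W F"
  unfolding ec_edges_def by (metis (no_types, lifting) UnI1 image_empty image_insert image_eqI)

lemma Inl_Inr_in_ec_edges: "e \<in> E \<Longrightarrow> x \<in> e \<Longrightarrow> w \<in> W \<Longrightarrow> {Inl x, Inr (e, w)} \<in> ec_edges V E W F"
  unfolding ec_edges_def by blast

lemma ec_edges_leaving_copy:
  assumes "{Inr (e, w), v} \<in> ec_edges V E W F" and "v \<notin> range (\<lambda>w. Inr (e, w))"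
  shows "\<exists>x\<in>e. v = Inl x"
proof -
  have "{Inr (e, w), v} \<noteq> (\<lambda>w. Inr (e', w)) ` f" for e' f
  proof
    assume copy: "{Inr (e, w), v} = (\<lambda>w. Inr (e', w)) ` f"
    then have "e' = e" by (metis (no_types, lifting) Pair_inject imageE insertI1 sum.inject(2))
    then show False using copy assms(2) by blast
  qed
  then show ?thesis using assms unfolding ec_edges_def by (auto simp: doubleton_eq_iff)
qed

lemma doubleton_in_complete_edges_iff [simp]:
  "{x, y} \<in> complete_edges V \<longleftrightarrow> x \<in> V \<and> y \<in> V \<and> x \<noteq> y"
  unfolding complete_edges_def by (auto simp: doubleton_eq_iff)

lemma complete_edges_iff: "e \<in> complete_edges V \<longleftrightarrow> e \<subseteq> V \<and> card e = 2"
  unfolding complete_edges_def card_2_iff by auto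

lemma path_from_copy_visits_end:
  assumes path: "is_path (ec_verts V E W) (ec_edges V E W F) xs (Inr (e, w)) v"
    and "v \<notin> range Inl" and "v \<notin> range (\<lambda>w. Inr (e, w))"
  shows "\<exists>x\<in>e. Inl x \<in> set (internal xs)"
proof -
  let ?copy = "range (\<lambda>w. Inr (e, w))"
  have xs: "xs \<noteq> []" "hd xs = Inr (e, w)" "last xs = v"
    and edges: "\<And>i. i < length xs - 1 \<Longrightarrow> {xs ! i, xs ! Suc i} \<in> ec_edges V E W F"
    using path unfolding is_path_def by blast+
  have copy_ends: "hd xs \<in> ?copy" "last xs \<notin> ?copy" using xs(2,3) assms(3) by simp_all
  obtain i where i: "Suc i < length xs" "xs ! i \<in> ?copy" "xs ! Suc i \<notin> ?copy"
    using ex_index_leaving[OF xs(1) copy_ends] by blast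
  then obtain w' where "xs ! i = Inr (e, w')" by blast
  then have "{Inr (e, w'), xs ! Suc i} \<in> ec_edges V E W F" using edges[of i] i(1) by simp
  then obtain x where x: "x \<in> e" "xs ! Suc i = Inl x" using ec_edges_leaving_copy[OF _ i(3)] by blast
  have "Suc i \<noteq> length xs - 1" using x xs assms(2) by (auto simp: last_conv_nth)
  then have "Inl x \<in> set (internal xs)" using nth_in_internal[of "Suc i" xs] i(1) x(2) by simp
  then show ?thesis using x(1) by blast
qed

lemma path_between_copies_visits_ends:
  assumes path: "is_path (ec_verts V E W) (ec_edges V E W F) xs (Inr (e, w)) (Inr (e', w'))"
    and "e \<noteq> e'"
  shows "\<exists>x\<in>e. \<exists>y\<in>e'. Inl x \<in> set (internal xs) \<and> Inl y \<in> set (internal xs)"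
proof -
  obtain x where "x \<in> e" "Inl x \<in> set (internal xs)"
    using path_from_copy_visits_end[OF path] assms(2) by blast
  moreover obtain y where "y \<in> e'" "Inl y \<in> set (internal (rev xs))"
    using path_from_copy_visits_end[OF is_path_rev[OF path]] assms(2) by blast
  ultimately show ?thesis by (auto simp: internal_rev)
qed

lemma card_le_mult_card_if_fibres_le:
  assumes "finite K" and "g ` A \<subseteq> K" and "\<And>j. j \<in> K \<Longrightarrow> card {x \<in> A. g x = j} \<le> b"
  shows "card A \<le> b * card K"
proof -
  have "A = (\<Union>j\<in>K. {x \<in> A. g x = j})" using assms(2) by blast
  then have "card A \<le> (\<Sum>j\<in>K. card {x \<in> A. g x = j})"
    using card_UN_le[OF assms(1)] by metis
  also have "\<dots> \<le> (\<Sum>j\<in>K. b)" using assms(3) by (rule sum_mono)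
  finally show ?thesis by (simp add: mult.commute)
qed

lemma card_le_3_mult_if_rainbow_vertex_coloring:
  assumes "w \<in> W"
    and "rainbow_vertex_coloring (ec_verts V (complete_edges V) W) (ec_edges V (complete_edges V) W F) k c"
  shows "card V \<le> 3 * k"
proof (rule ccontr)
  let ?VV = "ec_verts V (complete_edges V) W"
  let ?EE = "ec_edges V (complete_edges V) W F"
  have colors: "c ` ?VV \<subseteq> {1..k}" and connected: "\<forall>u\<in>?VV. \<forall>v\<in>?VV. rainbow_connected ?VV ?EE c u v"
    using assms(2) unfolding rainbow_vertex_coloring_iff by auto
  assume "\<not> card V \<le> 3 * k"
  moreover have "(\<lambda>x. c (Inl x)) ` V \<subseteq> {1..k}" using colors by auto
  ultimately obtain j where "card {x \<in> V. c (Inl x) = j} \<ge> 4"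
    using card_le_mult_card_if_fibres_le[of "{1..k}" "\<lambda>x. c (Inl x)" V 3] not_less_eq_eq
    by fastforce
  then obtain A where A: "A \<subseteq> {x \<in> V. c (Inl x) = j}" "card A = 4"
    by (meson obtain_subset_with_card_n)
  obtain e where e: "e \<subseteq> A" "card e = 2" using obtain_subset_with_card_n[of 2 A] A(2) by auto
  have "finite A" using A(2) card.infinite by force
  then have "card (A - e) = 2" using A(2) e by (simp add: card_Diff_subset finite_subset)
  then obtain e' where e': "e' \<subseteq> A - e" "card e' = 2" by blast
  have edges: "e \<in> complete_edges V" "e' \<in> complete_edges V"
    using A(1) e e' by (auto simp: complete_edges_iff)
  then obtain xs where path: "is_path ?VV ?EE xs (Inr (e, w)) (Inr (e', w))"
    and rainbow: "distinct (map c (internal xs))"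
    using connected assms(1) unfolding rainbow_connected_def by fastforce
  have "e \<noteq> e'" using e' by (auto simp: card_2_iff)
  then obtain x y where "x \<in> e" "y \<in> e'" "Inl x \<in> set (internal xs)" "Inl y \<in> set (internal xs)"
    using path_between_copies_visits_ends[OF path] by blast
  moreover from this have "x \<noteq> y" "c (Inl x) = c (Inl y)" using A(1) e e' by auto
  ultimately show False using rainbow by (auto simp: distinct_map inj_on_def)
qed

lemma rainbow_connected_Inl_Inl:
  assumes "x \<in> V" and "y \<in> V"
  shows "rainbow_connected (ec_verts V (complete_edges V) W) (ec_edges V (complete_edges V) W F) c (Inl x) (Inl y)"
proof (cases "x = y")
  case False
  then show ?thesis using assms
    by (intro rainbow_connectedI_length_le_3[of _ _ "[Inl x, Inl y]"]) (auto simp: is_path_Cons Inl_Inl_in_ec_edges)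
qed (use assms in \<open>simp add: rainbow_connected_refl\<close>)

lemma rainbow_connected_Inl_Inr:
  assumes "x \<in> V" and e: "e \<in> complete_edges V" and "w \<in> W"
  shows "rainbow_connected (ec_verts V (complete_edges V) W) (ec_edges V (complete_edges V) W F) c (Inl x) (Inr (e, w))"
proof (cases "x \<in> e")
  case True
  then show ?thesis using assms
    by (intro rainbow_connectedI_length_le_3[of _ _ "[Inl x, Inr (e, w)]"]) (auto simp: is_path_Cons Inl_Inr_in_ec_edges)
next
  case False
  obtain a where "a \<in> e" using e by (auto simp: complete_edges_iff card_2_iff)
  moreover have "a \<in> V" using e \<open>a \<in> e\<close> by (auto simp: complete_edges_iff)
  ultimately show ?thesis using assms False
    by (intro rainbow_connectedI_length_le_3[of _ _ "[Inl x, Inl a, Inr (e, w)]"])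
      (auto simp: is_path_Cons Inl_Inr_in_ec_edges intro: Inl_Inl_in_ec_edges)
qed

lemma ex_differently_colored_pair:
  assumes "finite V" and classes: "\<And>j. card {x \<in> V. g x = j} \<le> 3"
    and "A \<subseteq> V" and "B \<subseteq> V" and "a0 \<in> A" and "b0 \<in> B" and "3 < card (A \<union> B)"
  shows "\<exists>a\<in>A. \<exists>b\<in>B. g a \<noteq> g b"
proof (rule ccontr)
  assume "\<not> ?thesis"
  then have "g x = g b0" if "x \<in> A \<union> B" for x
    using that \<open>a0 \<in> A\<close> \<open>b0 \<in> B\<close> by (metis UnE)
  then have "A \<union> B \<subseteq> {x \<in> V. g x = g b0}" using assms(3,4) by auto
  then have "card (A \<union> B) \<le> card {x \<in> V. g x = g b0}" using \<open>finite V\<close> by (intro card_mono) auto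
  also have "\<dots> \<le> 3" by (rule classes)
  finally show False using assms(7) by simp
qed

lemma rainbow_connected_Inr_Inr:
  assumes "finite V" and classes: "\<And>j. card {x \<in> V. c (Inl x) = j} \<le> 3"
    and e: "e \<in> complete_edges V" and w: "w \<in> W" and e': "e' \<in> complete_edges V" and w': "w' \<in> W"
  shows "rainbow_connected (ec_verts V (complete_edges V) W) (ec_edges V (complete_edges V) W F) c
    (Inr (e, w)) (Inr (e', w'))"
proof (cases "(e, w) = (e', w')")
  case True
  then show ?thesis using e w by (simp add: rainbow_connected_refl)
next
  case different: False
  let ?VV = "ec_verts V (complete_edges V) W"
  let ?EE = "ec_edges V (complete_edges V) W F"
  have ends: "e \<subseteq> V" "card e = 2" "e' \<subseteq> V" "card e' = 2"
    using e e' by (auto simp: complete_edges_iff)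
  have to_end: "{Inr (e, w), Inl a} \<in> ?EE" if "a \<in> e" for a
    using Inl_Inr_in_ec_edges[OF e that w] by (simp add: insert_commute)
  have from_end: "{Inl p, Inr (e', w')} \<in> ?EE" if "p \<in> e'" for p
    using Inl_Inr_in_ec_edges[OF e' that w'] .
  show ?thesis
  proof (cases "e \<inter> e' = {}")
    case False
    then obtain a where "a \<in> e" "a \<in> e'" by blast
    then have "is_path ?VV ?EE [Inr (e, w), Inl a, Inr (e', w')] (Inr (e, w)) (Inr (e', w'))"
      using e w e' w' ends different to_end from_end by (auto simp: is_path_Cons)
    then show ?thesis by (rule rainbow_connectedI_length_le_3) simp
  next
    case True
    obtain a0 p0 where "a0 \<in> e" "p0 \<in> e'" using ends by (auto simp: card_2_iff)
    moreover have "card (e \<union> e') = 4"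
      using card_Un_disjoint[OF finite_subset finite_subset True] ends \<open>finite V\<close> by simp
    ultimately have "\<exists>a\<in>e. \<exists>p\<in>e'. c (Inl a) \<noteq> c (Inl p)"
      by (intro ex_differently_colored_pair[OF \<open>finite V\<close> classes ends(1,3)]) simp_all
    then obtain a p where a: "a \<in> e" and p: "p \<in> e'" and colors: "c (Inl a) \<noteq> c (Inl p)" by blast
    have "a \<noteq> p" using a p True by blast
    then have "{Inl a, Inl p} \<in> ?EE" using a p ends by (intro Inl_Inl_in_ec_edges) auto
    then have "is_path ?VV ?EE [Inr (e, w), Inl a, Inl p, Inr (e', w')] (Inr (e, w)) (Inr (e', w'))"
      using e w e' w' a p ends True different to_end[OF a] from_end[OF p] by (auto simp: is_path_Cons)
    then show ?thesis using colors unfolding rainbow_connected_def internal_def by force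
  qed
qed

lemma rainbow_vertex_coloring_if_classes_le_3:
  assumes "finite V" and colors: "g ` V \<subseteq> {1..k}" and classes: "\<And>j. card {x \<in> V. g x = j} \<le> 3"
  shows "rainbow_vertex_coloring (ec_verts V (complete_edges V) W) (ec_edges V (complete_edges V) W F) k
    (case_sum g (\<lambda>_. 1))"
proof -
  let ?VV = "ec_verts V (complete_edges V) W"
  let ?EE = "ec_edges V (complete_edges V) W F"
  let ?c = "case_sum g (\<lambda>_. 1)"
  have k_pos: "1 \<le> k" if e: "e \<in> complete_edges V" for e
  proof -
    obtain x where "x \<in> e" "e \<subseteq> V" using e unfolding complete_edges_def by blast
    then show ?thesis using colors by fastforce
  qed
  have "?c u \<in> {1..k}" if "u \<in> ?VV" for u
    using that by (cases rule: ec_verts_cases) (use colors k_pos in auto)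
  then have "?c ` ?VV \<subseteq> {1..k}" by blast
  moreover have "rainbow_connected ?VV ?EE ?c u v" if "u \<in> ?VV" "v \<in> ?VV" for u v
    using that
    by (elim ec_verts_cases) (auto intro: rainbow_connected_Inl_Inl rainbow_connected_Inl_Inr
        rainbow_connected_Inr_Inr[OF \<open>finite V\<close>] rainbow_connected_sym[OF rainbow_connected_Inl_Inr]
        simp: classes)
  ultimately show ?thesis unfolding rainbow_vertex_coloring_iff by blast
qed

lemma obtain_coloring_with_classes_le_3:
  assumes "finite V"
  obtains g where "g ` V \<subseteq> {1..(card V + 2) div 3}" and "\<And>j. card {x \<in> V. g x = j} \<le> 3"
proof -
  obtain f where f: "bij_betw f V {0..<card V}" using ex_bij_betw_finite_nat[OF assms] by blast
  let ?g = "\<lambda>x. f x div 3 + 1"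
  have "f x div 3 + 1 \<le> (card V + 2) div 3" if "x \<in> V" for x
  proof -
    have "f x < card V" using f that by (auto simp: bij_betw_def)
    then show ?thesis by presburger
  qed
  then have "?g ` V \<subseteq> {1..(card V + 2) div 3}" by auto
  moreover have "card {x \<in> V. ?g x = j} \<le> 3" for j
  proof -
    have "f ` {x \<in> V. ?g x = j} \<subseteq> {3 * (j - 1)..<3 * (j - 1) + 3}" by auto
    then have "card {x \<in> V. ?g x = j} \<le> card {3 * (j - 1)..<3 * (j - 1) + 3}"
      using f by (intro card_inj_on_le) (auto simp: bij_betw_def inj_on_def)
    then show ?thesis by simp
  qed
  ultimately show ?thesis by (rule that)
qed

lemma rvc_eqI:
  assumes "rainbow_vertex_coloring V E k c"
    and "\<And>k' c'. rainbow_vertex_coloring V E k' c' \<Longrightarrow> k \<le> k'"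
  shows "rvc V E = k"
  unfolding rvc_def using assms by (intro Least_equality) auto

lemma nat_ceiling_divide_3: "nat \<lceil>real m / 3\<rceil> = (m + 2) div 3"
proof -
  have "\<lceil>real m / 3\<rceil> = \<lceil>of_int (int m) / of_int 3 :: real\<rceil>" by simp
  also have "\<dots> = - (- int m div 3)" by (rule ceiling_divide_eq_div)
  finally show ?thesis by linarith
qed

theorem theorem8:
  fixes V :: "'a set" and W :: "'b set" and F :: "'b set set" and m n :: nat
  assumes "finite V" and "card V = m" and "m \<ge> 3"
    and "simple_graph W F" and "connected_graph W F" and "card W = n" and "n \<ge> 2"
  shows "rvc (ec_verts V (complete_edges V) W) (ec_edges V (complete_edges V) W F)
           = nat \<lceil>real m / 3\<rceil>"
proof -
  let ?VV = "ec_verts V (complete_edges V) W"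
  let ?EE = "ec_edges V (complete_edges V) W F"
  have "W \<noteq> {}" using assms(6,7) by auto
  then obtain w where w: "w \<in> W" by blast
  obtain g where g: "g ` V \<subseteq> {1..(m + 2) div 3}" "\<And>j. card {x \<in> V. g x = j} \<le> 3"
    using obtain_coloring_with_classes_le_3[OF assms(1)] unfolding assms(2) by blast
  have "rvc ?VV ?EE = (m + 2) div 3"
  proof (rule rvc_eqI)
    show "rainbow_vertex_coloring ?VV ?EE ((m + 2) div 3) (case_sum g (\<lambda>_. 1))"
      by (rule rainbow_vertex_coloring_if_classes_le_3[OF assms(1) g])
  next
    fix k c
    assume "rainbow_vertex_coloring ?VV ?EE k c"
    from card_le_3_mult_if_rainbow_vertex_coloring[OF w this] have "m \<le> 3 * k"
      unfolding assms(2) .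
    then show "(m + 2) div 3 \<le> k" by linarith
  qed
  then show ?thesis by (simp add: nat_ceiling_divide_3)
qed

end
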